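(* Let $G$ be a group, $X$ a $G$-bornological coarse space and $A,B$ invariant subsets of $X$ with $A\cup B=X$. Assume that the square of inclusions $$\begin{array}{ccc}A\cap B&\to&A\\ \downarrow&&\downarrow\\ B&\to&X\end{array}$$ (all subsets with the induced structures) is a push-out in the category $G\mathbf{BC}$ of $G$-bornological coarse spaces, that $A$ and $A\cap B$ are nice in $X$, and that $V[A]\cap B$ is nice in $X$ for a cofinal family of invariant coarse entourages $V$ of $X$. Then the pair $(A,B)$ is coarsely excisive.
   Context: A bornological coarse space is a set with a coarse structure (entourages containing the diagonal, closed under subsets, finite unions, inverses and composition) and a compatible bornology ($U[B]$ bounded for entourages $U$ and bounded $B$); morphisms are controlled and proper maps. A $G$-bornological coarse space is one with an action of $G$ by automorphisms such that the invariant entourages are cofinal in the coarse structure. For an entourage $U$ and a subset $C$, $U[C]=\{x\mid \exists c\in C: (x,c)\in U\}$. A subset $C$ of $X$ is nice if for every invariant coarse entourage $U$ of $X$ containing the diagonal the inclusion $C\to U[C]$ (induced structures) is a coarse equivalence. A pair $(A,B)$ of invariant subsets with $A\cup B=X$ is coarsely excisive if $A$ and $A\cap B$ are nice in $X$, $V[A]\cap B$ is nice in $X$ for a cofinal family of invariant entourages $V$ of $X$, and for every coarse entourage $U$ of $X$ there exists a coarse entourage $V$ with $U[A]\cap U[B]\subseteq V[A\cap B]$. *)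

theory Defs
  imports "HOL-Algebra.Group"
begin

record 'a bcs =
  pts  :: "'a set"
  ents :: "('a \<times> 'a) set set"
  bdd  :: "'a set set"

definition ent_img :: "('a \<times> 'a) set \<Rightarrow> 'a set \<Rightarrow> 'a set" where
  "ent_img U C = {x. \<exists>c\<in>C. (x, c) \<in> U}"

definition coarse_structure :: "'a set \<Rightarrow> ('a \<times> 'a) set set \<Rightarrow> bool" where
  "coarse_structure S E \<longleftrightarrow>
     (\<forall>U\<in>E. U \<subseteq> S \<times> S) \<and>
     Id_on S \<in> E \<and>
     (\<forall>U\<in>E. \<forall>V. V \<subseteq> U \<longrightarrow> V \<in> E) \<and>
     (\<forall>U\<in>E. \<forall>V\<in>E. U \<union> V \<in> E) \<and>
     (\<forall>U\<in>E. converse U \<in> E) \<and>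
     (\<forall>U\<in>E. \<forall>V\<in>E. U O V \<in> E)"

definition bornology :: "'a set \<Rightarrow> 'a set set \<Rightarrow> bool" where
  "bornology S \<B> \<longleftrightarrow>
     (\<forall>B\<in>\<B>. B \<subseteq> S) \<and>
     (\<forall>x\<in>S. \<exists>B\<in>\<B>. x \<in> B) \<and>
     (\<forall>B\<in>\<B>. \<forall>B'. B' \<subseteq> B \<longrightarrow> B' \<in> \<B>) \<and>
     (\<forall>B\<in>\<B>. \<forall>B'\<in>\<B>. B \<union> B' \<in> \<B>)"

definition bornological_coarse :: "'a bcs \<Rightarrow> bool" where
  "bornological_coarse X \<longleftrightarrow>
     coarse_structure (pts X) (ents X) \<and> bornology (pts X) (bdd X) \<and>
     (\<forall>U\<in>ents X. \<forall>B\<in>bdd X. ent_img U B \<in> bdd X)"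

definition controlled :: "'a bcs \<Rightarrow> 'b bcs \<Rightarrow> ('a \<Rightarrow> 'b) \<Rightarrow> bool" where
  "controlled X Y f \<longleftrightarrow> (\<forall>U\<in>ents X. (\<lambda>(x, y). (f x, f y)) ` U \<in> ents Y)"

definition proper :: "'a bcs \<Rightarrow> 'b bcs \<Rightarrow> ('a \<Rightarrow> 'b) \<Rightarrow> bool" where
  "proper X Y f \<longleftrightarrow> (\<forall>B\<in>bdd Y. {x\<in>pts X. f x \<in> B} \<in> bdd X)"

definition bc_morphism :: "'a bcs \<Rightarrow> 'b bcs \<Rightarrow> ('a \<Rightarrow> 'b) \<Rightarrow> bool" where
  "bc_morphism X Y f \<longleftrightarrow> f \<in> pts X \<rightarrow> pts Y \<and> controlled X Y f \<and> proper X Y f"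

definition bc_automorphism :: "'a bcs \<Rightarrow> ('a \<Rightarrow> 'a) \<Rightarrow> bool" where
  "bc_automorphism X f \<longleftrightarrow> bc_morphism X X f \<and>
     (\<exists>h. bc_morphism X X h \<and> (\<forall>x\<in>pts X. h (f x) = x \<and> f (h x) = x))"

definition invariant_set :: "('g, 'm) monoid_scheme \<Rightarrow> ('g \<Rightarrow> 'a \<Rightarrow> 'a) \<Rightarrow> 'a set \<Rightarrow> bool" where
  "invariant_set G \<phi> S \<longleftrightarrow> (\<forall>g\<in>carrier G. \<forall>x\<in>S. \<phi> g x \<in> S)"

definition invariant_ent ::
  "('g, 'm) monoid_scheme \<Rightarrow> ('g \<Rightarrow> 'a \<Rightarrow> 'a) \<Rightarrow> ('a \<times> 'a) set \<Rightarrow> bool" where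
  "invariant_ent G \<phi> U \<longleftrightarrow> (\<forall>g\<in>carrier G. \<forall>(x, y)\<in>U. (\<phi> g x, \<phi> g y) \<in> U)"

definition G_bc_space :: "('g, 'm) monoid_scheme \<Rightarrow> ('g \<Rightarrow> 'a \<Rightarrow> 'a) \<Rightarrow> 'a bcs \<Rightarrow> bool" where
  "G_bc_space G \<phi> X \<longleftrightarrow>
     group G \<and> bornological_coarse X \<and>
     (\<forall>x\<in>pts X. \<phi> \<one>\<^bsub>G\<^esub> x = x) \<and>
     (\<forall>g\<in>carrier G. \<forall>h\<in>carrier G. \<forall>x\<in>pts X. \<phi> (g \<otimes>\<^bsub>G\<^esub> h) x = \<phi> g (\<phi> h x)) \<and>
     (\<forall>g\<in>carrier G. bc_automorphism X (\<phi> g)) \<and>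
     (\<forall>U\<in>ents X. \<exists>V\<in>ents X. invariant_ent G \<phi> V \<and> U \<subseteq> V)"

definition equivariant ::
  "('g, 'm) monoid_scheme \<Rightarrow> ('g \<Rightarrow> 'a \<Rightarrow> 'a) \<Rightarrow> ('g \<Rightarrow> 'b \<Rightarrow> 'b) \<Rightarrow> 'a set \<Rightarrow> ('a \<Rightarrow> 'b) \<Rightarrow> bool" where
  "equivariant G \<phi> \<psi> S f \<longleftrightarrow> (\<forall>g\<in>carrier G. \<forall>x\<in>S. f (\<phi> g x) = \<psi> g (f x))"

definition G_morphism ::
  "('g, 'm) monoid_scheme \<Rightarrow> ('g \<Rightarrow> 'a \<Rightarrow> 'a) \<Rightarrow> 'a bcs \<Rightarrow> ('g \<Rightarrow> 'b \<Rightarrow> 'b) \<Rightarrow> 'b bcs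
     \<Rightarrow> ('a \<Rightarrow> 'b) \<Rightarrow> bool" where
  "G_morphism G \<phi> X \<psi> Y f \<longleftrightarrow> bc_morphism X Y f \<and> equivariant G \<phi> \<psi> (pts X) f"

definition induced :: "'a bcs \<Rightarrow> 'a set \<Rightarrow> 'a bcs" where
  "induced X Y = \<lparr>pts = Y, ents = {U \<inter> (Y \<times> Y) | U. U \<in> ents X},
                  bdd = {B \<inter> Y | B. B \<in> bdd X}\<rparr>"

definition close :: "'a bcs \<Rightarrow> 'b bcs \<Rightarrow> ('a \<Rightarrow> 'b) \<Rightarrow> ('a \<Rightarrow> 'b) \<Rightarrow> bool" where
  "close X Y f g \<longleftrightarrow> (\<lambda>x. (f x, g x)) ` pts X \<in> ents Y"

definition G_coarse_equivalence ::
  "('g, 'm) monoid_scheme \<Rightarrow> ('g \<Rightarrow> 'a \<Rightarrow> 'a) \<Rightarrow> 'a bcs \<Rightarrow> ('g \<Rightarrow> 'b \<Rightarrow> 'b) \<Rightarrow> 'b bcs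
     \<Rightarrow> ('a \<Rightarrow> 'b) \<Rightarrow> bool" where
  "G_coarse_equivalence G \<phi> X \<psi> Y f \<longleftrightarrow> G_morphism G \<phi> X \<psi> Y f \<and>
     (\<exists>h. G_morphism G \<psi> Y \<phi> X h \<and> close X X (h \<circ> f) id \<and> close Y Y (f \<circ> h) id)"

definition nice :: "('g, 'm) monoid_scheme \<Rightarrow> ('g \<Rightarrow> 'a \<Rightarrow> 'a) \<Rightarrow> 'a bcs \<Rightarrow> 'a set \<Rightarrow> bool" where
  "nice G \<phi> X C \<longleftrightarrow>
     (\<forall>U\<in>ents X. invariant_ent G \<phi> U \<and> Id_on (pts X) \<subseteq> U \<longrightarrow>
        G_coarse_equivalence G \<phi> (induced X C) \<phi> (induced X (ent_img U C)) id)"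

definition cofinally_nice ::
  "('g, 'm) monoid_scheme \<Rightarrow> ('g \<Rightarrow> 'a \<Rightarrow> 'a) \<Rightarrow> 'a bcs \<Rightarrow> 'a set \<Rightarrow> 'a set \<Rightarrow> bool" where
  "cofinally_nice G \<phi> X A B \<longleftrightarrow>
     (\<exists>F. F \<subseteq> ents X \<and> (\<forall>V\<in>F. invariant_ent G \<phi> V) \<and>
          (\<forall>U\<in>ents X. \<exists>V\<in>F. U \<subseteq> V) \<and>
          (\<forall>V\<in>F. nice G \<phi> X (ent_img V A \<inter> B)))"

definition coarsely_excisive ::
  "('g, 'm) monoid_scheme \<Rightarrow> ('g \<Rightarrow> 'a \<Rightarrow> 'a) \<Rightarrow> 'a bcs \<Rightarrow> 'a set \<Rightarrow> 'a set \<Rightarrow> bool" where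
  "coarsely_excisive G \<phi> X A B \<longleftrightarrow>
     invariant_set G \<phi> A \<and> invariant_set G \<phi> B \<and> A \<union> B = pts X \<and>
     nice G \<phi> X A \<and> nice G \<phi> X (A \<inter> B) \<and> cofinally_nice G \<phi> X A B \<and>
     (\<forall>U\<in>ents X. \<exists>V\<in>ents X. ent_img U A \<inter> ent_img U B \<subseteq> ent_img V (A \<inter> B))"

text \<open>Test objects Z range over G-bornological coarse spaces on the carrier type of X
  (this is equivalent to arbitrary test objects).\<close>
definition is_pushout_GBC ::
  "('g, 'm) monoid_scheme \<Rightarrow> ('g \<Rightarrow> 'a \<Rightarrow> 'a) \<Rightarrow> 'a bcs \<Rightarrow> 'a set \<Rightarrow> 'a set \<Rightarrow> bool" where
  "is_pushout_GBC G \<phi> X A B \<longleftrightarrow>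
     (\<forall>(Z :: 'a bcs) (\<psi> :: 'g \<Rightarrow> 'a \<Rightarrow> 'a) f g.
        G_bc_space G \<psi> Z \<and>
        G_morphism G \<phi> (induced X A) \<psi> Z f \<and>
        G_morphism G \<phi> (induced X B) \<psi> Z g \<and>
        (\<forall>x\<in>A \<inter> B. f x = g x) \<longrightarrow>
        (\<exists>h. G_morphism G \<phi> X \<psi> Z h \<and> (\<forall>x\<in>A. h x = f x) \<and> (\<forall>x\<in>B. h x = g x)) \<and>
        (\<forall>h h'. G_morphism G \<phi> X \<psi> Z h \<and> (\<forall>x\<in>A. h x = f x) \<and> (\<forall>x\<in>B. h x = g x) \<and>
                G_morphism G \<phi> X \<psi> Z h' \<and> (\<forall>x\<in>A. h' x = f x) \<and> (\<forall>x\<in>B. h' x = g x)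
                \<longrightarrow> (\<forall>x\<in>pts X. h x = h' x)))"

end

theory Submission
  imports Defs
begin

(* Call an invariant entourage V of X excisive if there is an entourage W of X such that
   whenever a V-step joins a point of A with a point of B, its first point is W-close to A \<inter> B.
   The entourages contained in excisive ones form a G-bornological coarse structure Z on X that is
   coarser than that of X. The inclusions of A and of B into Z are morphisms, so the push-out
   property provides a morphism X \<rightarrow> Z extending them, which can only be the identity. Hence every
   entourage of X lies in an excisive one, and this is exactly the excision condition. *)

definition excisive_via :: "'a set \<Rightarrow> 'a set \<Rightarrow> ('a \<times> 'a) set \<Rightarrow> ('a \<times> 'a) set \<Rightarrow> bool" where
  "excisive_via A B V W \<longleftrightarrow>
     (\<forall>(x, y)\<in>V. x \<in> A \<and> y \<in> B \<or> x \<in> B \<and> y \<in> A \<longrightarrow> (\<exists>c\<in>A \<inter> B. (x, c) \<in> W))"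

lemma excisive_via_Id_on: "excisive_via A B (Id_on S) (Id_on S)"
  unfolding excisive_via_def by blast

lemma excisive_via_Un:
  "excisive_via A B V W \<Longrightarrow> excisive_via A B V' W' \<Longrightarrow> excisive_via A B (V \<union> V') (W \<union> W')"
  unfolding excisive_via_def by blast

lemma excisive_via_converse:
  "excisive_via A B V W \<Longrightarrow> excisive_via A B (converse V) (converse V O W)"
  unfolding excisive_via_def by blast

lemma excisive_via_relcomp:
  assumes "excisive_via A B V W" "excisive_via A B V' W'" "V \<subseteq> (A \<union> B) \<times> (A \<union> B)"
  shows "excisive_via A B (V O V') (W \<union> V O W')"
  unfolding excisive_via_def
proof (intro ballI impI, clarify)
  fix x y z assume xy: "(x, y) \<in> V" and yz: "(y, z) \<in> V'"
    and crossing: "x \<in> A \<and> z \<in> B \<or> x \<in> B \<and> z \<in> A"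
  have "y \<in> A \<union> B" using xy assms(3) by blast
  then consider "x \<in> A \<and> y \<in> B \<or> x \<in> B \<and> y \<in> A" | "y \<in> A \<and> z \<in> B \<or> y \<in> B \<and> z \<in> A"
    using crossing by blast
  then show "\<exists>c\<in>A \<inter> B. (x, c) \<in> W \<union> V O W'"
    using assms(1,2) xy yz unfolding excisive_via_def by cases blast+
qed

lemma excisive_via_restrict:
  "C \<subseteq> A \<or> C \<subseteq> B \<Longrightarrow> excisive_via A B (V \<inter> C \<times> C) (V \<union> Id_on C)"
  unfolding excisive_via_def by blast

lemma excisive_via_ent_img:
  assumes "excisive_via A B V W" "U \<subseteq> V" "U \<subseteq> (A \<union> B) \<times> (A \<union> B)"
  shows "ent_img U A \<inter> ent_img U B \<subseteq> ent_img W (A \<inter> B)"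
  using assms unfolding excisive_via_def ent_img_def by blast

lemma invariant_ent_Un:
  "invariant_ent G \<phi> U \<Longrightarrow> invariant_ent G \<phi> V \<Longrightarrow> invariant_ent G \<phi> (U \<union> V)"
  unfolding invariant_ent_def by blast

lemma invariant_ent_converse: "invariant_ent G \<phi> U \<Longrightarrow> invariant_ent G \<phi> (converse U)"
  unfolding invariant_ent_def by blast

lemma invariant_ent_relcomp:
  "invariant_ent G \<phi> U \<Longrightarrow> invariant_ent G \<phi> V \<Longrightarrow> invariant_ent G \<phi> (U O V)"
  unfolding invariant_ent_def by blast

lemma invariant_ent_restrict:
  "invariant_ent G \<phi> U \<Longrightarrow> invariant_set G \<phi> C \<Longrightarrow> invariant_ent G \<phi> (U \<inter> C \<times> C)"
  unfolding invariant_ent_def invariant_set_def by blast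

lemma invariant_ent_Id_on: "invariant_set G \<phi> S \<Longrightarrow> invariant_ent G \<phi> (Id_on S)"
  unfolding invariant_ent_def invariant_set_def by blast

lemma coarse_structureD:
  assumes "coarse_structure S E" "U \<in> E"
  shows "U \<subseteq> S \<times> S" "V \<subseteq> U \<Longrightarrow> V \<in> E" "V \<in> E \<Longrightarrow> U \<union> V \<in> E" "converse U \<in> E"
    "V \<in> E \<Longrightarrow> U O V \<in> E"
  using assms unfolding coarse_structure_def by blast+

lemma coarse_structure_Id_on: "coarse_structure S E \<Longrightarrow> Id_on S \<in> E"
  unfolding coarse_structure_def by blast

lemma G_bc_space_coarse_structure: "G_bc_space G \<phi> X \<Longrightarrow> coarse_structure (pts X) (ents X)"
  unfolding G_bc_space_def bornological_coarse_def by blast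

lemma G_bc_space_invariant_cofinal:
  "G_bc_space G \<phi> X \<Longrightarrow> U \<in> ents X \<Longrightarrow> \<exists>V\<in>ents X. invariant_ent G \<phi> V \<and> U \<subseteq> V"
  unfolding G_bc_space_def by blast

lemma G_bc_space_invariant_pts: "G_bc_space G \<phi> X \<Longrightarrow> invariant_set G \<phi> (pts X)"
  unfolding G_bc_space_def bc_automorphism_def bc_morphism_def invariant_set_def by blast

lemma G_bc_space_action_inv:
  assumes "G_bc_space G \<phi> X" "g \<in> carrier G" "x \<in> pts X"
  shows "\<phi> (inv\<^bsub>G\<^esub> g) (\<phi> g x) = x" "\<phi> g (\<phi> (inv\<^bsub>G\<^esub> g) x) = x"
proof -
  have grp: "group G" using assms(1) unfolding G_bc_space_def by blast
  then have inv_g: "inv\<^bsub>G\<^esub> g \<in> carrier G" using assms(2) by simp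
  have "\<phi> (inv\<^bsub>G\<^esub> g) (\<phi> g x) = \<phi> (inv\<^bsub>G\<^esub> g \<otimes>\<^bsub>G\<^esub> g) x"
    using assms inv_g unfolding G_bc_space_def by simp
  also have "\<dots> = x"
    using assms grp group.l_inv[OF grp assms(2)] unfolding G_bc_space_def by simp
  finally show "\<phi> (inv\<^bsub>G\<^esub> g) (\<phi> g x) = x" .
  have "\<phi> g (\<phi> (inv\<^bsub>G\<^esub> g) x) = \<phi> (g \<otimes>\<^bsub>G\<^esub> inv\<^bsub>G\<^esub> g) x"
    using assms inv_g unfolding G_bc_space_def by simp
  also have "\<dots> = x"
    using assms grp group.r_inv[OF grp assms(2)] unfolding G_bc_space_def by simp
  finally show "\<phi> g (\<phi> (inv\<^bsub>G\<^esub> g) x) = x" .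
qed

lemma G_bc_space_coarsening:
  assumes X: "G_bc_space G \<phi> X"
    and E: "coarse_structure (pts X) E" "E \<subseteq> ents X"
    and E_cofinal: "\<forall>U\<in>E. \<exists>V\<in>E. invariant_ent G \<phi> V \<and> U \<subseteq> V"
  shows "G_bc_space G \<phi> (X\<lparr>ents := E\<rparr>)" (is "G_bc_space G \<phi> ?Z")
proof -
  have morphism: "bc_morphism ?Z ?Z (\<phi> g)" if g: "g \<in> carrier G" for g
  proof -
    have "(\<lambda>(x, y). (\<phi> g x, \<phi> g y)) ` U \<in> E" if "U \<in> E" for U
    proof -
      obtain V where "V \<in> E" "invariant_ent G \<phi> V" "U \<subseteq> V" using E_cofinal \<open>U \<in> E\<close> by blast
      then have "(\<lambda>(x, y). (\<phi> g x, \<phi> g y)) ` U \<subseteq> V" using g unfolding invariant_ent_def by fast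
      then show ?thesis using coarse_structureD(2)[OF E(1) \<open>V \<in> E\<close>] by blast
    qed
    moreover have "bc_morphism X X (\<phi> g)"
      using X g unfolding G_bc_space_def bc_automorphism_def by blast
    ultimately show ?thesis unfolding bc_morphism_def controlled_def proper_def by simp
  qed
  have "bc_automorphism ?Z (\<phi> g)" if g: "g \<in> carrier G" for g
  proof -
    have "inv\<^bsub>G\<^esub> g \<in> carrier G" using X g unfolding G_bc_space_def by simp
    then show ?thesis
      unfolding bc_automorphism_def using morphism g G_bc_space_action_inv[OF X g]
      by (intro conjI exI[of _ "\<phi> (inv\<^bsub>G\<^esub> g)"]) auto
  qed
  moreover have "bornological_coarse ?Z"
    using X E unfolding G_bc_space_def bornological_coarse_def by auto
  ultimately show ?thesis using X E_cofinal unfolding G_bc_space_def by simp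
qed

definition excisive_ents ::
  "('g, 'm) monoid_scheme \<Rightarrow> ('g \<Rightarrow> 'a \<Rightarrow> 'a) \<Rightarrow> 'a bcs \<Rightarrow> 'a set \<Rightarrow> 'a set \<Rightarrow> ('a \<times> 'a) set set" where
  "excisive_ents G \<phi> X A B =
     {U. \<exists>V\<in>ents X. invariant_ent G \<phi> V \<and> U \<subseteq> V \<and> (\<exists>W\<in>ents X. excisive_via A B V W)}"

lemma excisive_entsI:
  "V \<in> ents X \<Longrightarrow> invariant_ent G \<phi> V \<Longrightarrow> W \<in> ents X \<Longrightarrow> excisive_via A B V W \<Longrightarrow> U \<subseteq> V
    \<Longrightarrow> U \<in> excisive_ents G \<phi> X A B"
  unfolding excisive_ents_def by blast

lemma excisive_entsE:
  assumes "U \<in> excisive_ents G \<phi> X A B"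
  obtains V W where "V \<in> ents X" "invariant_ent G \<phi> V" "U \<subseteq> V" "W \<in> ents X" "excisive_via A B V W"
  using assms unfolding excisive_ents_def by blast

lemma excisive_ents_subset: "coarse_structure (pts X) (ents X) \<Longrightarrow> excisive_ents G \<phi> X A B \<subseteq> ents X"
  unfolding coarse_structure_def excisive_ents_def by blast

lemma excisive_ents_cofinal:
  "U \<in> excisive_ents G \<phi> X A B \<Longrightarrow> \<exists>V\<in>excisive_ents G \<phi> X A B. invariant_ent G \<phi> V \<and> U \<subseteq> V"
  unfolding excisive_ents_def by blast

lemma excisive_ents_ent_img:
  assumes "U \<in> excisive_ents G \<phi> X A B" "U \<subseteq> (A \<union> B) \<times> (A \<union> B)"
  shows "\<exists>W\<in>ents X. ent_img U A \<inter> ent_img U B \<subseteq> ent_img W (A \<inter> B)"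
  using assms(1)
proof (rule excisive_entsE)
  fix V W assume "U \<subseteq> V" "W \<in> ents X" "excisive_via A B V W"
  then show ?thesis using excisive_via_ent_img assms(2) by blast
qed

lemma coarse_structure_excisive_ents:
  assumes X: "coarse_structure (pts X) (ents X)" and AB: "A \<union> B = pts X"
    and inv_X: "invariant_set G \<phi> (pts X)"
  shows "coarse_structure (pts X) (excisive_ents G \<phi> X A B)" (is "coarse_structure _ ?E")
  unfolding coarse_structure_def
proof (intro conjI ballI allI impI)
  note ents_X = coarse_structureD[OF X]
  show "U \<subseteq> pts X \<times> pts X" if "U \<in> ?E" for U
    using that excisive_ents_subset[OF X] ents_X(1) by blast
  from coarse_structure_Id_on[OF X] show "Id_on (pts X) \<in> ?E"
    by (intro excisive_entsI[where V = "Id_on (pts X)" and W = "Id_on (pts X)"])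
      (simp_all add: excisive_via_Id_on invariant_ent_Id_on[OF inv_X])
  show "U' \<in> ?E" if "U \<in> ?E" "U' \<subseteq> U" for U U'
    using that unfolding excisive_ents_def by blast
  show "U \<union> U' \<in> ?E" if U: "U \<in> ?E" and U': "U' \<in> ?E" for U U'
  proof -
    obtain V W where "V \<in> ents X" "invariant_ent G \<phi> V" "U \<subseteq> V" "W \<in> ents X" "excisive_via A B V W"
      using U by (rule excisive_entsE)
    moreover obtain V' W' where
      "V' \<in> ents X" "invariant_ent G \<phi> V'" "U' \<subseteq> V'" "W' \<in> ents X" "excisive_via A B V' W'"
      using U' by (rule excisive_entsE)
    ultimately show ?thesis
      by (intro excisive_entsI[where V = "V \<union> V'" and W = "W \<union> W'"])
        (auto simp: ents_X invariant_ent_Un excisive_via_Un)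
  qed
  show "converse U \<in> ?E" if U: "U \<in> ?E" for U
  proof -
    obtain V W where "V \<in> ents X" "invariant_ent G \<phi> V" "U \<subseteq> V" "W \<in> ents X" "excisive_via A B V W"
      using U by (rule excisive_entsE)
    then show ?thesis
      by (intro excisive_entsI[where V = "converse V" and W = "converse V O W"])
        (auto simp: ents_X invariant_ent_converse excisive_via_converse)
  qed
  show "U O U' \<in> ?E" if U: "U \<in> ?E" and U': "U' \<in> ?E" for U U'
  proof -
    obtain V W where "V \<in> ents X" "invariant_ent G \<phi> V" "U \<subseteq> V" "W \<in> ents X" "excisive_via A B V W"
      using U by (rule excisive_entsE)
    moreover obtain V' W' where
      "V' \<in> ents X" "invariant_ent G \<phi> V'" "U' \<subseteq> V'" "W' \<in> ents X" "excisive_via A B V' W'"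
      using U' by (rule excisive_entsE)
    moreover have "V \<subseteq> (A \<union> B) \<times> (A \<union> B)" using \<open>V \<in> ents X\<close> ents_X(1) AB by blast
    ultimately show ?thesis
      by (intro excisive_entsI[where V = "V O V'" and W = "W \<union> V O W'"])
        (auto simp: ents_X invariant_ent_relcomp excisive_via_relcomp relcomp_mono)
  qed
qed

lemma G_bc_space_excisive_ents:
  assumes X: "G_bc_space G \<phi> X" and AB: "A \<union> B = pts X"
  shows "G_bc_space G \<phi> (X\<lparr>ents := excisive_ents G \<phi> X A B\<rparr>)"
proof (rule G_bc_space_coarsening[OF X])
  note X_coarse = G_bc_space_coarse_structure[OF X]
  show "coarse_structure (pts X) (excisive_ents G \<phi> X A B)"
    by (rule coarse_structure_excisive_ents[OF X_coarse AB G_bc_space_invariant_pts[OF X]])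
  show "excisive_ents G \<phi> X A B \<subseteq> ents X"
    by (rule excisive_ents_subset[OF X_coarse])
  show "\<forall>U\<in>excisive_ents G \<phi> X A B. \<exists>V\<in>excisive_ents G \<phi> X A B. invariant_ent G \<phi> V \<and> U \<subseteq> V"
    using excisive_ents_cofinal by blast
qed

lemma G_morphism_inclusion_excisive_ents:
  assumes X: "G_bc_space G \<phi> X" and C: "C \<subseteq> pts X" "invariant_set G \<phi> C" "C \<subseteq> A \<or> C \<subseteq> B"
  shows "G_morphism G \<phi> (induced X C) \<phi> (X\<lparr>ents := excisive_ents G \<phi> X A B\<rparr>) id"
proof -
  note X_coarse = G_bc_space_coarse_structure[OF X]
  have "U \<inter> C \<times> C \<in> excisive_ents G \<phi> X A B" if U: "U \<in> ents X" for U
  proof -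
    obtain V where V: "V \<in> ents X" "invariant_ent G \<phi> V" "U \<subseteq> V"
      using G_bc_space_invariant_cofinal[OF X U] by blast
    have "Id_on C \<in> ents X"
      using coarse_structureD(2)[OF X_coarse coarse_structure_Id_on[OF X_coarse]] C(1) by blast
    then have "V \<union> Id_on C \<in> ents X" "V \<inter> C \<times> C \<in> ents X"
      using coarse_structureD[OF X_coarse V(1)] by auto
    then show ?thesis
      using V invariant_ent_restrict[OF V(2) C(2)] excisive_via_restrict[OF C(3)]
      by (intro excisive_entsI[where V = "V \<inter> C \<times> C" and W = "V \<union> Id_on C"]) auto
  qed
  then have "controlled (induced X C) (X\<lparr>ents := excisive_ents G \<phi> X A B\<rparr>) id"
    unfolding controlled_def induced_def by auto
  moreover have "proper (induced X C) (X\<lparr>ents := excisive_ents G \<phi> X A B\<rparr>) id"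
    unfolding proper_def induced_def by auto
  ultimately show ?thesis
    using C(1) unfolding G_morphism_def bc_morphism_def equivariant_def induced_def by auto
qed

lemma ents_subset_if_identity_morphism:
  assumes "coarse_structure (pts X) (ents X)" "G_morphism G \<phi> X \<psi> (X\<lparr>ents := E\<rparr>) h"
    and "\<forall>x\<in>pts X. h x = x"
  shows "ents X \<subseteq> E"
proof
  fix U assume U: "U \<in> ents X"
  then have "U \<subseteq> pts X \<times> pts X" by (rule coarse_structureD(1)[OF assms(1)])
  then have "(\<lambda>(x, y). (h x, h y)) ` U = id ` U" using assms(3) by (intro image_cong) auto
  then show "U \<in> E" using assms(2) U unfolding G_morphism_def bc_morphism_def controlled_def by force
qed

lemma is_pushout_GBC_extension:
  fixes Z :: "'a bcs" and \<psi> :: "'g \<Rightarrow> 'a \<Rightarrow> 'a" and X :: "'a bcs" and G :: "('g, 'm) monoid_scheme"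
  assumes "is_pushout_GBC G \<phi> X A B" "G_bc_space G \<psi> Z"
    and "G_morphism G \<phi> (induced X A) \<psi> Z f" "G_morphism G \<phi> (induced X B) \<psi> Z g"
    and "\<forall>x\<in>A \<inter> B. f x = g x"
  obtains h where "G_morphism G \<phi> X \<psi> Z h" "\<forall>x\<in>A. h x = f x" "\<forall>x\<in>B. h x = g x"
  using assms(1)[unfolded is_pushout_GBC_def, rule_format, where Z = Z and \<psi> = \<psi> and f = f and g = g] assms(2-) by blast

theorem lemma3p7:
  fixes G :: "('g, 'm) monoid_scheme" and \<phi> :: "'g \<Rightarrow> 'a \<Rightarrow> 'a"
    and X :: "'a bcs" and A B :: "'a set"
  assumes "G_bc_space G \<phi> X"
    and "A \<subseteq> pts X" and "B \<subseteq> pts X"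
    and "invariant_set G \<phi> A" and "invariant_set G \<phi> B"
    and "A \<union> B = pts X"
    and "is_pushout_GBC G \<phi> X A B"
    and "nice G \<phi> X A" and "nice G \<phi> X (A \<inter> B)"
    and "cofinally_nice G \<phi> X A B"
  shows "coarsely_excisive G \<phi> X A B"
proof -
  let ?Z = "X\<lparr>ents := excisive_ents G \<phi> X A B\<rparr>"
  note X_coarse = G_bc_space_coarse_structure[OF assms(1)]
  obtain h where h: "G_morphism G \<phi> X \<phi> ?Z h" "\<forall>x\<in>A. h x = id x" "\<forall>x\<in>B. h x = id x"
  proof (rule is_pushout_GBC_extension[OF assms(7) G_bc_space_excisive_ents[OF assms(1,6)]])
    show "G_morphism G \<phi> (induced X A) \<phi> ?Z id" "G_morphism G \<phi> (induced X B) \<phi> ?Z id"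
      using G_morphism_inclusion_excisive_ents[OF assms(1)] assms(2-5) by simp_all
  qed simp_all
  have "\<forall>x\<in>pts X. h x = x"
    using h(2,3) assms(6) by auto
  then have "ents X \<subseteq> excisive_ents G \<phi> X A B"
    by (rule ents_subset_if_identity_morphism[OF X_coarse h(1)])
  then have "\<exists>W\<in>ents X. ent_img U A \<inter> ent_img U B \<subseteq> ent_img W (A \<inter> B)" if "U \<in> ents X" for U
    using excisive_ents_ent_img coarse_structureD(1)[OF X_coarse that] assms(6) that by blast
  then show ?thesis
    unfolding coarsely_excisive_def using assms(4-6,8-10) by blast
qed

end
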